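(* Let $X$ be a Banach space as described in the context, let $f\in X$ with $f(z)=\sum_{k=0}^\infty c_kz^k$ in $\mathbb{D}$, and assume $\lim_{n\to\infty}\|f-S_n(f)\|=0$, where $S_n(f)(z)=\sum_{k=0}^{n}c_kz^k$ is the $n$-th partial sum of the Taylor series of $f$. Then there exists a sequence $p_n\in\mathcal{P}_n[\mathbb{Z}]$ with $\lim_{n\to\infty}\|f-p_n\|=0$ if and only if all coefficients $c_k$ are integers.
   Context: $\mathbb{D}=\{z\in\mathbb{C}:|z|<1\}$. $X$ is a complex Banach space of functions analytic in $\mathbb{D}$ whose norm $\|\cdot\|$ satisfies: (i) $\|f(\cdot\, e^{it})\|=\|f(\cdot)\|$ for all $t\in\mathbb{R}$ and $f\in X$; (ii) $\|f\|<\infty$ for every entire function $f$; (iii) for all $f\in X$ and $g\in L[0,2\pi]$, $\big\|\frac{1}{2\pi}\int_0^{2\pi} f(ze^{it})g(t)\,dt\big\|\le \frac{1}{2\pi}\int_0^{2\pi}|g(t)|\,dt\cdot\|f\|$. A complex number is called an integer if its real and imaginary parts are integers; $\mathcal{P}_n[\mathbb{Z}]$ is the set of complex polynomials of degree at most $n-1$ with integer coefficients in this sense. *)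

theory Defs
  imports "HOL-Analysis.Analysis" "HOL-Computational_Algebra.Polynomial"
begin

text \<open>Elements of the space are functions complex => complex; only their values on the
  unit disk matter (membership and norm depend only on the restriction to the disk).\<close>

definition unit_disk :: "complex set" where
  "unit_disk = ball 0 1"

definition gauss_int :: "complex \<Rightarrow> bool" where
  "gauss_int z \<longleftrightarrow> Re z \<in> \<int> \<and> Im z \<in> \<int>"

text \<open>P_n[Z]: polynomials of degree at most n-1 (only the zero polynomial for n = 0)
  with Gaussian-integer coefficients.\<close>
definition int_polys :: "nat \<Rightarrow> complex poly set" where
  "int_polys n = {p. (\<forall>i. gauss_int (coeff p i)) \<and> (p = 0 \<or> degree p < n)}"

definition rot_conv :: "(complex \<Rightarrow> complex) \<Rightarrow> (real \<Rightarrow> complex) \<Rightarrow> complex \<Rightarrow> complex" where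
  "rot_conv f g = (\<lambda>z. (1 / (2 * of_real pi)) *
      (LINT t:{0..2*pi}|lborel. (f (z * exp (\<i> * of_real t)) * g t :: complex)))"

definition admissible_space :: "(complex \<Rightarrow> complex) set \<Rightarrow> ((complex \<Rightarrow> complex) \<Rightarrow> real) \<Rightarrow> bool" where
  "admissible_space X N \<longleftrightarrow>
     \<comment> \<open>functions analytic in the disk; only disk values matter\<close>
     (\<forall>f\<in>X. f holomorphic_on unit_disk) \<and>
     (\<forall>f g. (\<forall>z\<in>unit_disk. f z = g z) \<longrightarrow> (f \<in> X \<longleftrightarrow> g \<in> X) \<and> N f = N g) \<and>
     \<comment> \<open>complex vector space\<close>
     (\<lambda>z. 0) \<in> X \<and>
     (\<forall>f\<in>X. \<forall>g\<in>X. (\<lambda>z. f z + g z) \<in> X) \<and>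
     (\<forall>f\<in>X. \<forall>c. (\<lambda>z. c * f z) \<in> X) \<and>
     \<comment> \<open>norm\<close>
     (\<forall>f\<in>X. N f \<ge> 0) \<and>
     (\<forall>f\<in>X. N f = 0 \<longleftrightarrow> (\<forall>z\<in>unit_disk. f z = 0)) \<and>
     (\<forall>f\<in>X. \<forall>g\<in>X. N (\<lambda>z. f z + g z) \<le> N f + N g) \<and>
     (\<forall>f\<in>X. \<forall>c. N (\<lambda>z. c * f z) = cmod c * N f) \<and>
     \<comment> \<open>completeness\<close>
     (\<forall>F. (\<forall>n. F n \<in> X) \<and>
          (\<forall>e>0. \<exists>M. \<forall>m\<ge>M. \<forall>n\<ge>M. N (\<lambda>z. F m z - F n z) < e) \<longrightarrow>
          (\<exists>f\<in>X. (\<lambda>n. N (\<lambda>z. F n z - f z)) \<longlonglongrightarrow> 0)) \<and>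
     \<comment> \<open>(i) rotation invariance\<close>
     (\<forall>f\<in>X. \<forall>t::real. (\<lambda>z. f (z * exp (\<i> * of_real t))) \<in> X \<and>
                        N (\<lambda>z. f (z * exp (\<i> * of_real t))) = N f) \<and>
     \<comment> \<open>(ii) every entire function has finite norm, i.e. belongs to X\<close>
     (\<forall>f. f holomorphic_on UNIV \<longrightarrow> f \<in> X) \<and>
     \<comment> \<open>(iii) convolution inequality\<close>
     (\<forall>f\<in>X. \<forall>g::real \<Rightarrow> complex. set_integrable lborel {0..2*pi} g \<longrightarrow>
        rot_conv f g \<in> X \<and>
        N (rot_conv f g) \<le> (1 / (2 * pi)) * (LINT t:{0..2*pi}|lborel. cmod (g t)) * N f)"

end

theory Submission
  imports Defs
begin

text \<open>Convolving a polynomial \<open>q\<close> with the kernel \<open>e\<^sup>-\<^sup>i\<^sup>k\<^sup>t\<close> leaves only its term \<open>coeff q k \<cdot> z\<^sup>k\<close>,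
  so property (iii) gives \<open>|coeff q k| \<cdot> \<parallel>z\<^sup>k\<parallel> \<le> \<parallel>q\<parallel>\<close>: coefficients depend continuously on
  polynomials in norm. Since both the \<open>p\<^sub>n\<close> and the Taylor partial sums converge to \<open>f\<close>, the \<open>k\<close>-th
  coefficients of the \<open>p\<^sub>n\<close> tend to \<open>c\<^sub>k\<close>, and the Gaussian integers are closed. Conversely, if all
  \<open>c\<^sub>k\<close> are Gaussian integers, the Taylor partial sums themselves are admissible approximants.\<close>

definition fourier_kernel :: "nat \<Rightarrow> real \<Rightarrow> complex" where
  "fourier_kernel k = (\<lambda>t. exp (- (\<i> * of_nat k * of_real t)))"

lemma has_integral_exp_int_mult:
  fixes m :: int
  shows "((\<lambda>t. exp (\<i> * of_int m * of_real t)) has_integral (if m = 0 then of_real (2*pi) else 0))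
           {0..2*pi}"
proof (cases "m = 0")
  case True
  then show ?thesis
    using has_integral_const_real[of "1::complex" 0 "2*pi"] by (simp add: scaleR_conv_of_real)
next
  case False
  have "((\<lambda>t. exp (\<i> * of_int m * of_real t) / (\<i> * of_int m)) has_vector_derivative
          exp (\<i> * of_int m * of_real t)) (at t within {0..2*pi})" for t
    using False by (auto intro!: derivative_eq_intros has_vector_derivative_real_field
                         simp: field_simps)
  then have "((\<lambda>t. exp (\<i> * of_int m * of_real t)) has_integral
      (exp (\<i> * of_int m * of_real (2*pi)) / (\<i> * of_int m)
       - exp (\<i> * of_int m * of_real 0) / (\<i> * of_int m))) {0..2*pi}"
    by (intro fundamental_theorem_of_calculus) auto
  moreover have "exp (\<i> * of_int m * of_real (2*pi)) = 1"
    using exp_integer_2pi[of "of_int m"] by (simp add: mult_ac)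
  ultimately show ?thesis
    using False by simp
qed

lemma set_integrable_continuous_on_interval:
  fixes g :: "real \<Rightarrow> complex"
  assumes "continuous_on {a..b} g"
  shows "set_integrable lborel {a..b} g"
  unfolding set_integrable_def by (rule borel_integrable_compact) (use assms in auto)

lemma set_integrable_fourier_kernel: "set_integrable lborel {0..2*pi} (fourier_kernel k)"
  unfolding fourier_kernel_def
  by (intro set_integrable_continuous_on_interval continuous_intros)

lemma integral_norm_fourier_kernel:
  "(LINT t:{0..2*pi}|lborel. cmod (fourier_kernel k t)) = 2 * pi"
proof -
  have "set_integrable lborel {0..2*pi} (\<lambda>t. 1 :: real)"
    unfolding set_integrable_def by (rule borel_integrable_compact) auto
  moreover have "cmod (fourier_kernel k t) = 1" for t
    by (simp add: fourier_kernel_def norm_exp_eq_Re)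
  ultimately show ?thesis
    by (simp add: set_borel_integral_eq_integral(2))
qed

lemma rot_conv_poly_fourier_kernel:
  "rot_conv (poly q) (fourier_kernel k) = (\<lambda>z. coeff q k * z ^ k)"
proof
  fix z :: complex
  define M where "M = max k (degree q)"
  define e where "e j t = exp (\<i> * of_int (int j - int k) * of_real t)" for j and t :: real
  have integrand: "poly q (z * exp (\<i> * of_real t)) * fourier_kernel k t
                   = (\<Sum>j\<le>M. (coeff q j * z ^ j) * e j t)" for t
  proof -
    have "(z * exp (\<i> * of_real t)) ^ j * fourier_kernel k t = z ^ j * e j t" for j
    proof -
      have "(z * exp (\<i> * of_real t)) ^ j * fourier_kernel k t
            = z ^ j * exp (of_nat j * (\<i> * of_real t) - \<i> * of_nat k * of_real t)"
        by (simp add: fourier_kernel_def power_mult_distrib exp_of_nat_mult [symmetric]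
                      exp_diff exp_minus field_simps)
      also have "\<dots> = z ^ j * e j t"
        by (simp add: e_def algebra_simps)
      finally show ?thesis .
    qed
    moreover have "poly q w = (\<Sum>j\<le>M. coeff q j * w ^ j)" for w
      unfolding poly_altdef M_def
      by (rule sum.mono_neutral_left) (auto simp: coeff_eq_0)
    ultimately show ?thesis
      by (simp add: sum_distrib_right mult.assoc)
  qed
  have "((\<lambda>t. \<Sum>j\<le>M. (coeff q j * z ^ j) * e j t) has_integral
          (\<Sum>j\<le>M. (coeff q j * z ^ j) * (if int j - int k = 0 then of_real (2*pi) else 0)))
        {0..2*pi}"
    unfolding e_def by (intro has_integral_sum finite_atMost has_integral_mult_right
                               has_integral_exp_int_mult)
  also have "(\<Sum>j\<le>M. (coeff q j * z ^ j) * (if int j - int k = 0 then of_real (2*pi) else 0))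
             = of_real (2*pi) * (coeff q k * z ^ k)"
    by (simp add: M_def if_distrib [of "(*) _"] sum.delta cong: if_cong)
  finally have "((\<lambda>t. poly q (z * exp (\<i> * of_real t)) * fourier_kernel k t) has_integral
                   of_real (2*pi) * (coeff q k * z ^ k)) {0..2*pi}"
    by (simp only: integrand)
  moreover have "set_integrable lborel {0..2*pi}
                   (\<lambda>t. poly q (z * exp (\<i> * of_real t)) * fourier_kernel k t)"
    unfolding fourier_kernel_def
    by (intro set_integrable_continuous_on_interval continuous_intros)
  ultimately show "rot_conv (poly q) (fourier_kernel k) z = coeff q k * z ^ k"
    by (simp add: rot_conv_def set_borel_integral_eq_integral(2) integral_unique)
qed

locale admissible_function_space =
  fixes X :: "(complex \<Rightarrow> complex) set" and N :: "(complex \<Rightarrow> complex) \<Rightarrow> real"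
  assumes add_mem: "f \<in> X \<Longrightarrow> g \<in> X \<Longrightarrow> (\<lambda>z. f z + g z) \<in> X"
    and scale_mem: "f \<in> X \<Longrightarrow> (\<lambda>z. a * f z) \<in> X"
    and norm_nonneg: "f \<in> X \<Longrightarrow> N f \<ge> 0"
    and norm_eq_zero_iff: "f \<in> X \<Longrightarrow> N f = 0 \<longleftrightarrow> (\<forall>z\<in>unit_disk. f z = 0)"
    and norm_add_le: "f \<in> X \<Longrightarrow> g \<in> X \<Longrightarrow> N (\<lambda>z. f z + g z) \<le> N f + N g"
    and norm_scale: "f \<in> X \<Longrightarrow> N (\<lambda>z. a * f z) = cmod a * N f"
    and entire_mem: "f holomorphic_on UNIV \<Longrightarrow> f \<in> X"
    and norm_rot_conv_le: "f \<in> X \<Longrightarrow> set_integrable lborel {0..2*pi} w \<Longrightarrow>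
           N (rot_conv f w) \<le> (1 / (2 * pi)) * (LINT t:{0..2*pi}|lborel. cmod (w t)) * N f"

lemma admissible_function_spaceI:
  "admissible_space X N \<Longrightarrow> admissible_function_space X N"
  unfolding admissible_space_def by unfold_locales (elim conjE; simp)+

context admissible_function_space
begin

lemma poly_mem: "poly q \<in> X"
  by (rule entire_mem) (intro holomorphic_intros)

lemma monomial_mem: "(\<lambda>z. z ^ k) \<in> X"
  by (rule entire_mem) (intro holomorphic_intros)

lemma diff_mem:
  assumes "f \<in> X" "g \<in> X"
  shows "(\<lambda>z. f z - g z) \<in> X"
  using add_mem[OF assms(1) scale_mem[OF assms(2), of "-1"]] by simp

lemma norm_monomial_pos: "N (\<lambda>z. z ^ k) > 0"
proof -
  have "(1/2 :: complex) \<in> unit_disk" "(1/2 :: complex) ^ k \<noteq> 0"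
    by (simp_all add: unit_disk_def)
  then have "N (\<lambda>z. z ^ k) \<noteq> 0"
    using norm_eq_zero_iff[OF monomial_mem] by blast
  with norm_nonneg[OF monomial_mem[of k]] show ?thesis
    by linarith
qed

lemma norm_diff_triangle:
  assumes "f \<in> X" "g \<in> X" "h \<in> X"
  shows "N (\<lambda>z. f z - h z) \<le> N (\<lambda>z. g z - f z) + N (\<lambda>z. g z - h z)"
proof -
  have "N (\<lambda>z. f z - g z) = N (\<lambda>z. (-1) * (g z - f z))"
    by simp
  also have "\<dots> = N (\<lambda>z. g z - f z)"
    using norm_scale[OF diff_mem[OF assms(2,1)], of "-1"] by simp
  finally have swap: "N (\<lambda>z. f z - g z) = N (\<lambda>z. g z - f z)" .
  have "N (\<lambda>z. f z - h z) = N (\<lambda>z. (f z - g z) + (g z - h z))"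
    by simp
  also have "\<dots> \<le> N (\<lambda>z. f z - g z) + N (\<lambda>z. g z - h z)"
    using norm_add_le diff_mem assms by blast
  finally show ?thesis
    by (simp only: swap)
qed

lemma norm_coeff_le: "cmod (coeff q k) * N (\<lambda>z. z ^ k) \<le> N (poly q)"
  using norm_rot_conv_le[OF poly_mem set_integrable_fourier_kernel, of q k]
  by (simp add: rot_conv_poly_fourier_kernel integral_norm_fourier_kernel norm_scale[OF monomial_mem])

lemma norm_coeff_diff_le:
  "cmod (coeff p k - coeff q k) * N (\<lambda>z. z ^ k) \<le> N (\<lambda>z. poly p z - poly q z)"
proof -
  have "poly (p - q) = (\<lambda>z. poly p z - poly q z)"
    by (simp add: fun_eq_iff)
  then show ?thesis
    using norm_coeff_le[of "p - q" k] by simp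
qed

lemma norm_coeff_diff_le_approx:
  assumes "f \<in> X" and P: "(\<lambda>m. N (\<lambda>z. f z - poly (P m) z)) \<longlonglongrightarrow> 0"
    and "\<forall>\<^sub>F m in sequentially. coeff (P m) k = a"
  shows "cmod (a - coeff q k) * N (\<lambda>z. z ^ k) \<le> N (\<lambda>z. f z - poly q z)"
proof (rule tendsto_lowerbound)
  show "(\<lambda>m. N (\<lambda>z. f z - poly (P m) z) + N (\<lambda>z. f z - poly q z))
          \<longlonglongrightarrow> N (\<lambda>z. f z - poly q z)"
    using tendsto_add[OF P tendsto_const] by simp
  show "\<forall>\<^sub>F m in sequentially. cmod (a - coeff q k) * N (\<lambda>z. z ^ k)
          \<le> N (\<lambda>z. f z - poly (P m) z) + N (\<lambda>z. f z - poly q z)"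
    using assms(3)
  proof eventually_elim
    case (elim m)
    have "cmod (a - coeff q k) * N (\<lambda>z. z ^ k) \<le> N (\<lambda>z. poly (P m) z - poly q z)"
      using norm_coeff_diff_le[of "P m" k q] elim by simp
    also have "\<dots> \<le> N (\<lambda>z. f z - poly (P m) z) + N (\<lambda>z. f z - poly q z)"
      by (rule norm_diff_triangle[OF poly_mem \<open>f \<in> X\<close> poly_mem])
    finally show ?case .
  qed
qed simp

lemma coeff_tendsto_of_approx:
  assumes "f \<in> X" and "(\<lambda>m. N (\<lambda>z. f z - poly (P m) z)) \<longlonglongrightarrow> 0"
    and "\<forall>\<^sub>F m in sequentially. coeff (P m) k = a"
    and p: "(\<lambda>n. N (\<lambda>z. f z - poly (p n) z)) \<longlonglongrightarrow> 0"
  shows "(\<lambda>n. coeff (p n) k) \<longlonglongrightarrow> a"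
proof -
  have "(\<lambda>n. coeff (p n) k - a) \<longlonglongrightarrow> 0"
  proof (rule Lim_null_comparison)
    show "(\<lambda>n. N (\<lambda>z. f z - poly (p n) z) / N (\<lambda>z. z ^ k)) \<longlonglongrightarrow> 0"
      using tendsto_divide_zero[OF p] by simp
    show "\<forall>\<^sub>F n in sequentially.
            norm (coeff (p n) k - a) \<le> N (\<lambda>z. f z - poly (p n) z) / N (\<lambda>z. z ^ k)"
      using norm_coeff_diff_le_approx[OF assms(1-3)] norm_monomial_pos
      by (simp add: pos_le_divide_eq norm_minus_commute)
  qed
  then show ?thesis
    by (rule LIM_zero_cancel)
qed

end

definition taylor_poly :: "(nat \<Rightarrow> complex) \<Rightarrow> nat \<Rightarrow> complex poly" where
  "taylor_poly c n = (\<Sum>j<n. monom (c j) j)"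

lemma coeff_taylor_poly: "coeff (taylor_poly c n) k = (if k < n then c k else 0)"
  by (simp add: taylor_poly_def coeff_sum)

lemma poly_taylor_poly: "poly (taylor_poly c n) z = (\<Sum>j<n. c j * z ^ j)"
  by (simp add: taylor_poly_def poly_sum poly_monom)

lemma gauss_int_0: "gauss_int 0"
  by (simp add: gauss_int_def)

lemma taylor_poly_in_int_polys:
  assumes "\<forall>k. gauss_int (c k)"
  shows "taylor_poly c n \<in> int_polys n"
proof -
  have "taylor_poly c n = 0 \<or> degree (taylor_poly c n) < n"
  proof (cases n)
    case (Suc m)
    then have "degree (taylor_poly c n) \<le> m"
      by (intro degree_le) (simp add: coeff_taylor_poly)
    with Suc show ?thesis
      by simp
  qed (simp add: taylor_poly_def)
  with assms show ?thesis
    by (simp add: int_polys_def coeff_taylor_poly gauss_int_0)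
qed

lemma gauss_int_limit:
  assumes "a \<longlonglongrightarrow> l" and "\<And>n. gauss_int (a n)"
  shows "gauss_int l"
  using assms closed_sequentially[OF closed_Ints _ tendsto_Re[OF assms(1)]]
    closed_sequentially[OF closed_Ints _ tendsto_Im[OF assms(1)]]
  by (simp add: gauss_int_def)

theorem theorem5p3:
  fixes X :: "(complex \<Rightarrow> complex) set" and N :: "(complex \<Rightarrow> complex) \<Rightarrow> real"
    and f :: "complex \<Rightarrow> complex" and c :: "nat \<Rightarrow> complex"
  assumes "admissible_space X N"
    and "f \<in> X"
    and "\<forall>z\<in>unit_disk. (\<lambda>k. c k * z ^ k) sums f z"
    and "(\<lambda>n. N (\<lambda>z. f z - (\<Sum>k\<le>n. c k * z ^ k))) \<longlonglongrightarrow> 0"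
  shows "(\<exists>p :: nat \<Rightarrow> complex poly. (\<forall>n. p n \<in> int_polys n) \<and>
            (\<lambda>n. N (\<lambda>z. f z - poly (p n) z)) \<longlonglongrightarrow> 0)
         \<longleftrightarrow> (\<forall>k. gauss_int (c k))"
proof -
  interpret admissible_function_space X N
    by (rule admissible_function_spaceI) fact
  have "(\<lambda>n. N (\<lambda>z. f z - poly (taylor_poly c (Suc n)) z)) \<longlonglongrightarrow> 0"
    using assms(4) by (simp only: poly_taylor_poly lessThan_Suc_atMost)
  then have taylor: "(\<lambda>n. N (\<lambda>z. f z - poly (taylor_poly c n) z)) \<longlonglongrightarrow> 0"
    by (rule LIMSEQ_imp_Suc)
  show ?thesis
  proof
    assume "\<exists>p. (\<forall>n. p n \<in> int_polys n) \<and> (\<lambda>n. N (\<lambda>z. f z - poly (p n) z)) \<longlonglongrightarrow> 0"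
    then obtain p where p_int: "\<And>n. p n \<in> int_polys n"
      and p_lim: "(\<lambda>n. N (\<lambda>z. f z - poly (p n) z)) \<longlonglongrightarrow> 0"
      by blast
    show "\<forall>k. gauss_int (c k)"
    proof
      fix k
      have "\<forall>\<^sub>F m in sequentially. coeff (taylor_poly c m) k = c k"
        using eventually_gt_at_top[of k] by eventually_elim (simp add: coeff_taylor_poly)
      then have "(\<lambda>n. coeff (p n) k) \<longlonglongrightarrow> c k"
        using coeff_tendsto_of_approx[OF assms(2) taylor _ p_lim] by blast
      then show "gauss_int (c k)"
        by (rule gauss_int_limit) (use p_int in \<open>simp add: int_polys_def\<close>)
    qed
  next
    assume "\<forall>k. gauss_int (c k)"
    then show "\<exists>p. (\<forall>n. p n \<in> int_polys n) \<and> (\<lambda>n. N (\<lambda>z. f z - poly (p n) z)) \<longlonglongrightarrow> 0"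
      using taylor_poly_in_int_polys taylor by blast
  qed
qed

end
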